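(* Let $p,q$ be positive integers, $e\in\mathbb{R}^p$ the vector of all ones, and let $(z,w)\in\mathbb{R}^p\times\mathbb{R}^q$ satisfy $z^+\not\ge\|w\|e$ and $\langle z^-,e\rangle<\|w\|$. For $\lambda\ge0$ let $N(\lambda):=\operatorname{diag}\big(-\operatorname{sgn}([(\lambda+1)z-\|w\|e]^-)\big)$. Given $\lambda_0>0$, define the sequence $\{\lambda_k\}$ by $N_k:=N(\lambda_k)$ and $$\big[-\|w\|+\langle e,N_kz\rangle\big]\lambda_{k+1}=-\langle e,N_k[z-\|w\|e]\rangle,\qquad k=0,1,\ldots.$$ Then for any $\lambda_0>0$ the sequence $\{\lambda_k\}$ is well defined and converges after at most $2^p$ steps to the unique solution $\lambda_*>0$ of the equation $$\lambda\|w\|=\left\langle e,[(\lambda+1)z-\|w\|e]^-\right\rangle.$$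
   Context: For $\alpha\in\mathbb{R}$, $\alpha^+:=\max(\alpha,0)$ and $\alpha^-:=\max(-\alpha,0)$; for vectors $z^+$, $z^-$ and $\operatorname{sgn}(z)$ are taken componentwise (with $\operatorname{sgn}(0)=0$), and $\operatorname{diag}(z)$ is the diagonal matrix with diagonal $z_1,\dots,z_p$. The order $\ge$ is componentwise; $z^+\not\ge\|w\|e$ means that $z^+\ge\|w\|e$ fails. (This sequence is the semi-smooth Newton method for the convex piecewise linear function $\psi(\lambda)=-\lambda\|w\|+\langle e,[(\lambda+1)z-\|w\|e]^-\rangle$.) *)

theory Defs
  imports "HOL-Analysis.Analysis"
begin

definition negpart :: "real \<Rightarrow> real" where "negpart a = max (- a) 0"
definition pospart :: "real \<Rightarrow> real" where "pospart a = max a 0"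

definition vneg :: "real^'n \<Rightarrow> real^'n" where "vneg x = (\<chi> i. negpart (x $ i))"
definition vpos :: "real^'n \<Rightarrow> real^'n" where "vpos x = (\<chi> i. pospart (x $ i))"

definition ones :: "real^'n" where "ones = (\<chi> i. 1)"

definition diagm :: "real^'n \<Rightarrow> real^'n^'n" where
  "diagm d = (\<chi> i j. if i = j then d $ i else 0)"

definition Nmat :: "real^'p \<Rightarrow> real^'q \<Rightarrow> real \<Rightarrow> real^'p^'p" where
  "Nmat z w l = diagm (- (\<chi> i. sgn (vneg ((l + 1) *\<^sub>R z - norm w *\<^sub>R ones) $ i)))"

definition ncoef :: "real^'p \<Rightarrow> real^'q \<Rightarrow> real \<Rightarrow> real" where
  "ncoef z w l = - norm w + ones \<bullet> (Nmat z w l *v z)"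

definition nrhs :: "real^'p \<Rightarrow> real^'q \<Rightarrow> real \<Rightarrow> real" where
  "nrhs z w l = - (ones \<bullet> (Nmat z w l *v (z - norm w *\<^sub>R ones)))"

fun lamseq :: "real^'p \<Rightarrow> real^'q \<Rightarrow> real \<Rightarrow> nat \<Rightarrow> real" where
  "lamseq z w l0 0 = l0"
| "lamseq z w l0 (Suc k) = nrhs z w (lamseq z w l0 k) / ncoef z w (lamseq z w l0 k)"

end

theory Submission
  imports Defs
begin

text \<open>Write \<open>a = \<parallel>w\<parallel>\<close> and \<open>\<psi>(\<lambda>) = \<langle>e, [(\<lambda>+1)z - a e]\<^sup>-\<rangle> - \<lambda>a\<close>. On the active set
  \<open>S = {i. (\<lambda>+1) z\<^sub>i < a}\<close>, \<open>\<psi>\<close> coincides with the affine function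
  \<open>\<Sum>\<^sub>i\<^sub>\<in>\<^sub>S (a - (\<lambda>+1) z\<^sub>i) - \<lambda>a\<close>, and every such affine piece (for any \<open>S\<close>) lies below \<open>\<psi>\<close>.
  Because \<open>\<langle>z\<^sup>-, e\<rangle> < a\<close>, all pieces have negative slope \<open>-(a + \<Sum>\<^sub>i\<^sub>\<in>\<^sub>S z\<^sub>i)\<close>, so \<open>\<psi>\<close> is
  strictly decreasing, and \<open>\<psi>(0) > 0\<close> since some \<open>z\<^sub>j < a\<close>. The Newton step jumps to the root
  of the current piece; that point has \<open>\<psi> \<ge> 0\<close>, so from the first step on the iterates increase
  and the active sets shrink. If the active set does not change, the new iterate is the root
  of the piece that now represents \<open>\<psi>\<close>, i.e. a root of \<open>\<psi>\<close>; and the active set is never empty while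
  \<open>\<psi> \<ge> 0\<close>. Hence a root of \<open>\<psi>\<close> is reached after at most \<open>p + 1 \<le> 2\<^sup>p\<close> steps.\<close>

definition active_set :: "real^'p \<Rightarrow> real \<Rightarrow> real \<Rightarrow> 'p set" where
  "active_set z a l = {i. (l + 1) * z $ i < a}"

definition psi :: "real^'p \<Rightarrow> real \<Rightarrow> real \<Rightarrow> real" where
  "psi z a l = (\<Sum>i\<in>UNIV. max (a - (l + 1) * z $ i) 0) - l * a"

definition psi_piece :: "real^'p \<Rightarrow> real \<Rightarrow> 'p set \<Rightarrow> real \<Rightarrow> real" where
  "psi_piece z a S l = (\<Sum>i\<in>S. a - (l + 1) * z $ i) - l * a"

definition piece_slope :: "real^'p \<Rightarrow> real \<Rightarrow> 'p set \<Rightarrow> real" where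
  "piece_slope z a S = a + (\<Sum>i\<in>S. z $ i)"

definition newton_step :: "real^'p \<Rightarrow> real \<Rightarrow> real \<Rightarrow> real" where
  "newton_step z a l =
     (\<Sum>i\<in>active_set z a l. a - z $ i) / piece_slope z a (active_set z a l)"

lemma inner_ones: "ones \<bullet> v = (\<Sum>i\<in>UNIV. v $ i)"
  by (simp add: inner_vec_def ones_def)

lemma diagm_mult_vec_nth: "(diagm d *v x) $ i = d $ i * x $ i"
proof -
  have "(diagm d *v x) $ i = (\<Sum>j\<in>UNIV. (if i = j then d $ i else 0) * x $ j)"
    unfolding diagm_def matrix_vector_mult_def by simp
  also have "\<dots> = (\<Sum>j\<in>UNIV. if j = i then d $ i * x $ i else 0)"
    by (rule sum.cong) auto
  finally show ?thesis by simp
qed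

lemma Nmat_mult_vec_nth:
  "(Nmat z w l *v x) $ i = (if i \<in> active_set z (norm w) l then - x $ i else 0)"
  unfolding Nmat_def diagm_mult_vec_nth
  by (simp add: vneg_def negpart_def ones_def active_set_def sgn_if)

lemma ncoef_eq: "ncoef z w l = - piece_slope z (norm w) (active_set z (norm w) l)"
  unfolding ncoef_def piece_slope_def inner_ones Nmat_mult_vec_nth
  by (simp add: sum.If_cases sum_negf)

lemma nrhs_eq: "nrhs z w l = - (\<Sum>i\<in>active_set z (norm w) l. norm w - z $ i)"
  unfolding nrhs_def inner_ones Nmat_mult_vec_nth
  by (simp add: sum.If_cases ones_def sum_negf)

lemma lamseq_eq_newton_iterate: "lamseq z w l0 k = (newton_step z (norm w) ^^ k) l0"
  by (induction k) (simp_all add: ncoef_eq nrhs_eq newton_step_def)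

lemma inner_ones_vneg:
  "ones \<bullet> vneg ((l + 1) *\<^sub>R z - a *\<^sub>R ones) = (\<Sum>i\<in>UNIV. max (a - (l + 1) * z $ i) 0)"
  unfolding inner_ones vneg_def negpart_def by (simp add: ones_def)

lemma psi_piece_affine:
  "psi_piece z a S l = (\<Sum>i\<in>S. a - z $ i) - l * piece_slope z a S"
  unfolding psi_piece_def piece_slope_def
  by (simp add: algebra_simps sum_subtractf sum_distrib_left sum.distrib)

lemma psi_piece_le_psi: "psi_piece z a S l \<le> psi z a l"
proof -
  have "(\<Sum>i\<in>S. a - (l + 1) * z $ i) \<le> (\<Sum>i\<in>S. max (a - (l + 1) * z $ i) 0)"
    by (rule sum_mono) simp
  also have "\<dots> \<le> (\<Sum>i\<in>UNIV. max (a - (l + 1) * z $ i) 0)"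
    by (rule sum_mono2) auto
  finally show ?thesis unfolding psi_piece_def psi_def by simp
qed

lemma psi_eq_psi_piece_active: "psi z a l = psi_piece z a (active_set z a l) l"
proof -
  have "(\<Sum>i\<in>UNIV. max (a - (l + 1) * z $ i) 0)
      = (\<Sum>i\<in>UNIV. if i \<in> active_set z a l then a - (l + 1) * z $ i else 0)"
    by (rule sum.cong) (auto simp: active_set_def)
  then show ?thesis unfolding psi_def psi_piece_def by (simp add: sum.If_cases)
qed

lemma psi_piece_newton_step:
  assumes "0 < piece_slope z a (active_set z a l)"
  shows "psi_piece z a (active_set z a l) (newton_step z a l) = 0"
  using assms unfolding psi_piece_affine newton_step_def by simp

lemma newton_step_eq:
  assumes "0 < piece_slope z a (active_set z a l)"
  shows "newton_step z a l = l + psi z a l / piece_slope z a (active_set z a l)"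
  using assms unfolding newton_step_def psi_eq_psi_piece_active psi_piece_affine
  by (simp add: field_simps)

lemma psi_newton_step_nonneg:
  assumes "0 < piece_slope z a (active_set z a l)"
  shows "0 \<le> psi z a (newton_step z a l)"
  using psi_piece_le_psi[of z a "active_set z a l" "newton_step z a l"]
  by (simp add: psi_piece_newton_step[OF assms])

lemma active_set_antimono:
  assumes "0 < a" "0 \<le> l" "l \<le> l'"
  shows "active_set z a l' \<subseteq> active_set z a l"
proof
  fix i assume "i \<in> active_set z a l'"
  then have i: "(l' + 1) * z $ i < a" by (simp add: active_set_def)
  have "(l + 1) * z $ i < a"
  proof (cases "z $ i \<le> 0")
    case True
    then have "(l + 1) * z $ i \<le> 0" using assms(2) by (simp add: mult_nonneg_nonpos)
    then show ?thesis using assms(1) by simp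
  next
    case False
    then have "(l + 1) * z $ i \<le> (l' + 1) * z $ i" using assms(3) by (intro mult_right_mono) auto
    then show ?thesis using i by simp
  qed
  then show "i \<in> active_set z a l" by (simp add: active_set_def)
qed

lemma sum_active_set_nonneg:
  assumes "0 \<le> a" "0 \<le> l"
  shows "0 \<le> (\<Sum>i\<in>active_set z a l. a - z $ i)"
proof (rule sum_nonneg)
  fix i assume "i \<in> active_set z a l"
  then have i: "(l + 1) * z $ i < a" by (simp add: active_set_def)
  show "0 \<le> a - z $ i"
  proof (cases "z $ i \<le> 0")
    case True then show ?thesis using assms(1) by simp
  next
    case False
    then have "z $ i \<le> (l + 1) * z $ i" using assms(2) by (simp add: algebra_simps)
    then show ?thesis using i by simp
  qed
qed

locale psi_setting =
  fixes z :: "real^'p" and a :: real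
  assumes neg_mass_less: "(\<Sum>i\<in>UNIV. negpart (z $ i)) < a"
    and some_below: "\<exists>j. z $ j < a"
begin

lemma a_pos: "0 < a"
  using neg_mass_less sum_nonneg[of UNIV "\<lambda>i. negpart (z $ i)"]
  by (simp add: negpart_def)

lemma piece_slope_pos: "0 < piece_slope z a S"
proof -
  have "- (\<Sum>i\<in>UNIV. negpart (z $ i)) \<le> - (\<Sum>i\<in>S. negpart (z $ i))"
    by (simp, rule sum_mono2) (auto simp: negpart_def)
  also have "\<dots> \<le> (\<Sum>i\<in>S. z $ i)"
    unfolding sum_negf[symmetric] by (rule sum_mono) (simp add: negpart_def)
  finally show ?thesis using neg_mass_less unfolding piece_slope_def by simp
qed

lemma psi_zero_pos: "0 < psi z a 0"
proof -
  obtain j where "z $ j < a" using some_below by blast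
  then have "0 < max (a - (0 + 1) * z $ j) 0" by simp
  also have "\<dots> \<le> (\<Sum>i\<in>UNIV. max (a - (0 + 1) * z $ i) 0)"
    by (rule member_le_sum) auto
  finally show ?thesis unfolding psi_def by simp
qed

lemma psi_strict_decreasing:
  assumes "l1 < l2"
  shows "psi z a l2 < psi z a l1"
proof -
  let ?S = "active_set z a l2"
  have "psi z a l2 = psi_piece z a ?S l2" by (rule psi_eq_psi_piece_active)
  also have "\<dots> < psi_piece z a ?S l1"
    unfolding psi_piece_affine using mult_strict_right_mono[OF assms piece_slope_pos] by simp
  also have "\<dots> \<le> psi z a l1" by (rule psi_piece_le_psi)
  finally show ?thesis .
qed

lemma psi_zero_unique: "psi z a l1 = 0 \<Longrightarrow> psi z a l2 = 0 \<Longrightarrow> l1 = l2"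
  using psi_strict_decreasing[of l1 l2] psi_strict_decreasing[of l2 l1]
  by (cases l1 l2 rule: linorder_cases) auto

lemma newton_step_nonneg: "0 \<le> l \<Longrightarrow> 0 \<le> newton_step z a l"
  unfolding newton_step_def
  using sum_active_set_nonneg[of a l z] a_pos piece_slope_pos by (simp add: divide_nonneg_pos)

lemma newton_iterate_nonneg: "0 \<le> l0 \<Longrightarrow> 0 \<le> (newton_step z a ^^ k) l0"
  by (induction k) (simp_all add: newton_step_nonneg)

lemma newton_step_fixed: "psi z a l = 0 \<Longrightarrow> newton_step z a l = l"
  using newton_step_eq[OF piece_slope_pos] by simp

lemma psi_newton_step_zero_if_active_stable:
  assumes "active_set z a (newton_step z a l) = active_set z a l"
  shows "psi z a (newton_step z a l) = 0"
  using psi_eq_psi_piece_active[of z a "newton_step z a l"]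
  by (simp add: assms psi_piece_newton_step[OF piece_slope_pos])

lemma active_set_nonempty:
  assumes "0 \<le> l" "0 \<le> psi z a l"
  shows "active_set z a l \<noteq> {}"
proof
  assume empty: "active_set z a l = {}"
  then have "psi z a l = - l * a"
    unfolding psi_eq_psi_piece_active psi_piece_def by simp
  with assms a_pos have "l = 0"
    by (simp add: mult_le_0_iff)
  with empty psi_zero_pos show False
    unfolding psi_eq_psi_piece_active psi_piece_def by simp
qed

lemma newton_iterate_progress:
  assumes "0 \<le> l0"
  defines "x \<equiv> \<lambda>k. (newton_step z a ^^ k) l0"
  shows "psi z a (x (Suc k)) = 0 \<or> card (active_set z a (x (Suc k))) + k \<le> CARD('p)"
proof (induction k)
  case 0
  show ?case by (simp add: card_mono)
next
  case (Suc k)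
  have step: "x (Suc n) = newton_step z a (x n)" for n
    by (simp add: x_def)
  have nonneg: "0 \<le> x n" for n
    unfolding x_def by (rule newton_iterate_nonneg[OF assms(1)])
  show ?case
  proof (cases "psi z a (x (Suc k)) = 0")
    case True
    then show ?thesis by (simp add: step newton_step_fixed)
  next
    case False
    with Suc.IH have card: "card (active_set z a (x (Suc k))) + k \<le> CARD('p)" by simp
    have "0 \<le> psi z a (x (Suc k))"
      unfolding step[of k] by (rule psi_newton_step_nonneg[OF piece_slope_pos])
    then have "x (Suc k) \<le> x (Suc (Suc k))"
      unfolding step[of "Suc k"] newton_step_eq[OF piece_slope_pos]
      using piece_slope_pos by (simp add: divide_nonneg_pos)
    then have shrink: "active_set z a (x (Suc (Suc k))) \<subseteq> active_set z a (x (Suc k))"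
      by (rule active_set_antimono[OF a_pos nonneg])
    show ?thesis
    proof (cases "active_set z a (x (Suc (Suc k))) = active_set z a (x (Suc k))")
      case True
      then show ?thesis unfolding step[of "Suc k"]
        by (simp add: psi_newton_step_zero_if_active_stable)
    next
      case False
      with shrink have "card (active_set z a (x (Suc (Suc k)))) < card (active_set z a (x (Suc k)))"
        by (intro psubset_card_mono) auto
      with card show ?thesis by simp
    qed
  qed
qed

lemma psi_newton_iterate_zero:
  assumes "0 \<le> l0"
  shows "psi z a ((newton_step z a ^^ Suc CARD('p)) l0) = 0"
proof (rule ccontr)
  let ?x = "(newton_step z a ^^ Suc CARD('p)) l0"
  assume "psi z a ?x \<noteq> 0"
  with newton_iterate_progress[OF assms, of "CARD('p)"] have "active_set z a ?x = {}"
    by simp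
  moreover have "0 \<le> psi z a ?x"
    by (simp add: psi_newton_step_nonneg[OF piece_slope_pos])
  ultimately show False
    using active_set_nonempty newton_iterate_nonneg[OF assms] by blast
qed

lemma newton_iterate_converges:
  assumes "0 \<le> l0" "psi z a ls = 0" "CARD('p) < k"
  shows "(newton_step z a ^^ k) l0 = ls"
proof -
  define x where "x = (newton_step z a ^^ Suc CARD('p)) l0"
  have root: "psi z a x = 0"
    unfolding x_def by (rule psi_newton_iterate_zero[OF assms(1)])
  have "(newton_step z a ^^ m) x = x" for m
    by (induction m) (simp_all add: newton_step_fixed[OF root])
  moreover obtain m where "k = m + Suc CARD('p)"
    using less_imp_Suc_add[OF assms(3)] by (metis add.commute add_Suc_right)
  ultimately have "(newton_step z a ^^ k) l0 = x"
    by (simp only: funpow_add comp_apply flip: x_def)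
  with psi_zero_unique[OF root assms(2)] show ?thesis by simp
qed

lemma psi_root_exists: "\<exists>ls > 0. psi z a ls = 0"
proof -
  define ls where "ls = (newton_step z a ^^ Suc CARD('p)) 1"
  have root: "psi z a ls = 0"
    unfolding ls_def by (rule psi_newton_iterate_zero) simp
  then have "ls \<noteq> 0" using psi_zero_pos by auto
  moreover have "0 \<le> ls"
    unfolding ls_def by (rule newton_iterate_nonneg) simp
  ultimately show ?thesis
    using root by (intro exI[of _ ls]) auto
qed

end

theorem proposition3:
  fixes z :: "real^'p" and w :: "real^'q"
  assumes "\<not> (\<forall>i. vpos z $ i \<ge> norm w)"
    and "vneg z \<bullet> ones < norm w"
  shows "\<exists>ls. (ls > 0 \<and> ls * norm w = ones \<bullet> vneg ((ls + 1) *\<^sub>R z - norm w *\<^sub>R ones))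
     \<and> (\<forall>l. l > 0 \<and> l * norm w = ones \<bullet> vneg ((l + 1) *\<^sub>R z - norm w *\<^sub>R ones) \<longrightarrow> l = ls)
     \<and> (\<forall>l0 > 0. (\<forall>k. 0 \<le> lamseq z w l0 k \<and> ncoef z w (lamseq z w l0 k) \<noteq> 0)
                 \<and> (\<forall>k \<ge> 2 ^ CARD('p). lamseq z w l0 k = ls))"
proof -
  interpret psi_setting z "norm w"
  proof
    show "(\<Sum>i\<in>UNIV. negpart (z $ i)) < norm w"
      using assms(2) by (simp add: inner_commute inner_ones vneg_def)
    show "\<exists>j. z $ j < norm w"
      using assms(1) by (auto simp: vpos_def pospart_def not_le)
  qed
  have root_iff: "l * norm w = ones \<bullet> vneg ((l + 1) *\<^sub>R z - norm w *\<^sub>R ones) \<longleftrightarrow> psi z (norm w) l = 0"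
    for l unfolding psi_def inner_ones_vneg by linarith
  obtain ls where ls: "ls > 0" "psi z (norm w) ls = 0" using psi_root_exists by blast
  have k_large: "CARD('p) < k" if "2 ^ CARD('p) \<le> k" for k :: nat
    using less_exp[of "CARD('p)"] that by linarith
  show ?thesis
    unfolding root_iff lamseq_eq_newton_iterate ncoef_eq
  proof (intro exI[of _ ls] conjI allI impI)
    fix l assume "0 < l \<and> psi z (norm w) l = 0"
    then show "l = ls" using psi_zero_unique ls(2) by blast
  next
    fix l0 :: real and k :: nat assume "0 < l0"
    then show "0 \<le> (newton_step z (norm w) ^^ k) l0" by (simp add: newton_iterate_nonneg)
    show "- piece_slope z (norm w) (active_set z (norm w) ((newton_step z (norm w) ^^ k) l0)) \<noteq> 0"
      using piece_slope_pos[of "active_set z (norm w) ((newton_step z (norm w) ^^ k) l0)"] by simp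
    assume "2 ^ CARD('p) \<le> k"
    then show "(newton_step z (norm w) ^^ k) l0 = ls"
      using newton_iterate_converges[OF _ ls(2)] \<open>0 < l0\<close> k_large by simp
  qed (use ls in auto)
qed

end
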